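(* Let $\mathscr C\subset\mathbb R^m$ be compact, let $f:\mathscr C\to\mathbb R$ be continuous, and let $\epsilon>0$. Then there exist a positive integer $N$ and vectors $\bm u_{i,j}\in\mathbb R^{m+1}$ ($1\le j\le i\le N$) such that the polynomial $$p(\bm x)=\sum_{i=1}^N\prod_{j=1}^i\langle\check{\bm x},\bm u_{i,j}\rangle,\qquad \check{\bm x}=(\bm x,1)\in\mathbb R^{m+1},$$ satisfies $|f(\bm x)-p(\bm x)|<\epsilon$ for all $\bm x\in\mathscr C$. Moreover, if $p$ approximates $f$ within $\epsilon$ with total degree at most $k$, one may take $N=\sum_{i=0}^k\binom{m+i-1}{i}$.
   Context: $\langle\cdot,\cdot\rangle$ is the standard inner product on $\mathbb R^{m+1}$. *)

theory Defs
  imports "HOL-Analysis.Analysis"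
begin

definition xcheck :: "real^'m \<Rightarrow> real^('m + unit)" where
  "xcheck x = (\<chi> i. case i of Inl j \<Rightarrow> x $ j | Inr _ \<Rightarrow> 1)"

definition ridge_prod_poly :: "nat \<Rightarrow> (nat \<Rightarrow> nat \<Rightarrow> real^('m + unit)) \<Rightarrow> real^'m \<Rightarrow> real" where
  "ridge_prod_poly N u x = (\<Sum>i=1..N. \<Prod>j=1..i. xcheck x \<bullet> u i j)"

definition poly_total_deg_le :: "nat \<Rightarrow> (real^'m \<Rightarrow> real) \<Rightarrow> bool" where
  "poly_total_deg_le k p \<longleftrightarrow>
     (\<exists>c :: ('m \<Rightarrow> nat) \<Rightarrow> real.
        \<forall>x. p x = (\<Sum>\<alpha>\<in>{\<alpha>. (\<Sum>i\<in>UNIV. \<alpha> i) \<le> k}. c \<alpha> * (\<Prod>i\<in>UNIV. (x $ i) ^ \<alpha> i)))"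

end

theory Submission
  imports Defs
begin

text \<open>
  A monomial c x^\<alpha> of degree d is a product of d + 1 affine forms \<langle>(x,1), u\<rangle>
  (d coordinate forms and the constant form c), and constant factors 1 pad it to a product
  of any larger number of affine forms. A polynomial of total degree at most k has at most
  N = \<Sum>i\<le>k. (m+i-1 choose i) monomials; ordering them by degree puts each monomial of
  degree d into a slot i > d, since there are at least d monomials of smaller degree.
  Filling the unused slots with 0 writes the polynomial exactly in the form
  \<Sum>i\<le>N. \<Prod>j\<le>i. \<langle>(x,1), u i j\<rangle>, and Stone-Weierstrass supplies a polynomial
  approximating f.
\<close>

abbreviation mdeg :: "('m::finite \<Rightarrow> nat) \<Rightarrow> nat" where
  "mdeg \<alpha> \<equiv> \<Sum>i\<in>UNIV. \<alpha> i"

abbreviation monom :: "('m::finite \<Rightarrow> nat) \<Rightarrow> real^'m \<Rightarrow> real" where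
  "monom \<alpha> x \<equiv> \<Prod>i\<in>UNIV. (x $ i) ^ \<alpha> i"

abbreviation exponents_le :: "nat \<Rightarrow> ('m::finite \<Rightarrow> nat) set" where
  "exponents_le k \<equiv> {\<alpha>. mdeg \<alpha> \<le> k}"

section \<open>Products of affine forms\<close>

definition affine_product :: "nat \<Rightarrow> (real^'m \<Rightarrow> real) \<Rightarrow> bool" where
  "affine_product d g \<longleftrightarrow> (\<exists>v. \<forall>x. g x = (\<Prod>j=1..d. xcheck x \<bullet> v j))"

lemma xcheck_inner_axis_Inl: "xcheck x \<bullet> axis (Inl l) c = x $ l * c"
  by (simp add: inner_axis xcheck_def)

lemma xcheck_inner_axis_Inr: "xcheck x \<bullet> axis (Inr u) c = c"
  by (simp add: inner_axis xcheck_def)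

lemma affine_product_0: "affine_product 0 (\<lambda>x. 1)"
  by (simp add: affine_product_def)

lemma affine_product_mult_inner:
  assumes "affine_product d g"
  shows "affine_product (Suc d) (\<lambda>x. g x * (xcheck x \<bullet> w))"
proof -
  obtain v where v: "\<And>x. g x = (\<Prod>j=1..d. xcheck x \<bullet> v j)"
    using assms affine_product_def by blast
  have "g x * (xcheck x \<bullet> w) = (\<Prod>j=1..Suc d. xcheck x \<bullet> (v(Suc d := w)) j)" for x
  proof -
    have "(\<Prod>j=1..d. xcheck x \<bullet> (v(Suc d := w)) j) = g x"
      unfolding v by (rule prod.cong) auto
    then show ?thesis by (simp add: prod.cl_ivl_Suc)
  qed
  then show ?thesis unfolding affine_product_def by blast
qed

lemma affine_product_cmult: "affine_product d g \<Longrightarrow> affine_product (Suc d) (\<lambda>x. c * g x)"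
  using affine_product_mult_inner[of d g "axis (Inr ()) c"]
  by (simp add: xcheck_inner_axis_Inr mult.commute)

lemma affine_product_mono:
  assumes "affine_product d g" "d \<le> i"
  shows "affine_product i g"
  using assms(2)
proof (induction i rule: dec_induct)
  case (step i)
  from affine_product_cmult[OF step.IH, of 1] show ?case by simp
qed (rule assms(1))

lemma affine_product_zero: "affine_product (Suc d) (\<lambda>x. 0)"
  using affine_product_cmult[OF affine_product_mono[OF affine_product_0], of d 0] by simp

lemma affine_product_mult_power:
  "affine_product d g \<Longrightarrow> affine_product (d + n) (\<lambda>x. g x * (x $ l) ^ n)"
proof (induction n)
  case (Suc n)
  from affine_product_mult_inner[OF Suc.IH[OF Suc.prems], of "axis (Inl l) 1"] show ?case
    by (simp add: xcheck_inner_axis_Inl mult_ac)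
qed simp

lemma affine_product_prod_power:
  assumes "finite A"
  shows "affine_product (\<Sum>i\<in>A. \<alpha> i) (\<lambda>x. \<Prod>i\<in>A. (x $ i) ^ \<alpha> i)"
  using assms
proof (induction A rule: finite_induct)
  case empty
  then show ?case using affine_product_0 by simp
next
  case (insert a A)
  from affine_product_mult_power[OF insert.IH, of "\<alpha> a" a] show ?case
    using insert.hyps by (simp add: mult_ac add_ac)
qed

lemma affine_product_cmult_monom: "affine_product (Suc (mdeg \<alpha>)) (\<lambda>x. c * monom \<alpha> x)"
  by (rule affine_product_cmult[OF affine_product_prod_power]) simp

section \<open>Counting exponent vectors\<close>

lemma finite_exponents_le: "finite (exponents_le k :: ('m::finite \<Rightarrow> nat) set)"
proof (rule finite_subset)
  show "exponents_le k \<subseteq> Pi\<^sub>E (UNIV::'m set) (\<lambda>_. {..k})"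
  proof
    fix \<alpha> :: "'m \<Rightarrow> nat"
    assume "\<alpha> \<in> exponents_le k"
    then have "\<alpha> i \<le> k" for i
      using member_le_sum[of i UNIV \<alpha>] by simp
    then show "\<alpha> \<in> Pi\<^sub>E UNIV (\<lambda>_. {..k})"
      by (simp add: PiE_UNIV_domain)
  qed
qed (rule finite_PiE, auto)

lemma card_exponents_of_degree_le: "card {\<alpha>::'m::finite \<Rightarrow> nat. mdeg \<alpha> = e} \<le> (CARD('m) + e - 1) choose e"
proof -
  obtain h where h: "bij_betw h {0..<CARD('m)} (UNIV::'m set)"
    using ex_bij_betw_nat_finite[of "UNIV::'m set"] by auto
  define F where "F \<alpha> = map (\<alpha> \<circ> h) [0..<CARD('m)]" for \<alpha> :: "'m \<Rightarrow> nat"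
  have sum_F: "sum_list (F \<alpha>) = mdeg \<alpha>" for \<alpha>
    using sum.reindex_bij_betw[OF h, of \<alpha>] by (simp add: F_def sum_list_distinct_conv_sum_set)
  have "inj F"
  proof
    fix \<alpha> \<beta> assume "F \<alpha> = F \<beta>"
    then have "\<alpha> (h j) = \<beta> (h j)" if "j < CARD('m)" for j
      using nth_map[of j _ "\<alpha> \<circ> h"] nth_map[of j _ "\<beta> \<circ> h"] that by (simp add: F_def)
    moreover have "\<exists>j<CARD('m). i = h j" for i
      using bij_betw_imp_surj_on[OF h] by (metis atLeastLessThan_iff imageE UNIV_I)
    ultimately show "\<alpha> = \<beta>"
      by (metis ext)
  qed
  have lists: "F ` {\<alpha>. mdeg \<alpha> = e} \<subseteq> {l. length l = CARD('m) \<and> sum_list l = e}"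
    using sum_F by (auto simp: F_def)
  have "finite {l::nat list. length l = CARD('m) \<and> sum_list l = e}"
    by (rule finite_subset[OF _ finite_lists_length_eq[OF finite_atMost[of e]]])
       (auto simp: subset_eq dest: member_le_sum_list)
  then have "card (F ` {\<alpha>. mdeg \<alpha> = e}) \<le> card {l::nat list. length l = CARD('m) \<and> sum_list l = e}"
    using lists by (rule card_mono)
  also have "\<dots> = (e + CARD('m) - 1) choose e"
    by (rule card_length_sum_list)
  finally show ?thesis
    using card_image[OF inj_on_subset[OF \<open>inj F\<close>]] by (simp add: add.commute)
qed

lemma card_exponents_le:
  "card (exponents_le k :: ('m::finite \<Rightarrow> nat) set) \<le> (\<Sum>i=0..k. (CARD('m) + i - 1) choose i)"
proof -
  have "exponents_le k = (\<Union>e\<in>{0..k}. {\<alpha>::'m \<Rightarrow> nat. mdeg \<alpha> = e})"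
    by auto
  then have "card (exponents_le k :: ('m \<Rightarrow> nat) set) \<le> (\<Sum>e=0..k. card {\<alpha>::'m \<Rightarrow> nat. mdeg \<alpha> = e})"
    using card_UN_le[of "{0..k}" "\<lambda>e. {\<alpha>::'m \<Rightarrow> nat. mdeg \<alpha> = e}"] by simp
  also have "\<dots> \<le> (\<Sum>i=0..k. (CARD('m) + i - 1) choose i)"
    by (rule sum_mono) (rule card_exponents_of_degree_le)
  finally show ?thesis .
qed

text \<open>The pure powers of a single coordinate with degrees t < e witness the bound.\<close>

lemma le_card_exponents_of_smaller_degree:
  assumes "e \<le> k"
  shows "e \<le> card {\<beta> \<in> exponents_le k :: ('m::finite \<Rightarrow> nat) set. mdeg \<beta> < e}"
proof -
  define b where "b t = (\<lambda>i::'m. if i = undefined then t else 0)" for t :: nat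
  have mdeg_b: "mdeg (b t) = t" for t
    unfolding b_def by (simp add: sum.delta)
  have "inj b"
    by (rule injI) (metis b_def)
  have "b ` {..<e} \<subseteq> {\<beta> \<in> exponents_le k. mdeg \<beta> < e}"
    using mdeg_b assms by auto
  then have "card (b ` {..<e}) \<le> card {\<beta> \<in> exponents_le k :: ('m \<Rightarrow> nat) set. mdeg \<beta> < e}"
    by (rule card_mono[rotated]) (simp add: finite_exponents_le)
  then show ?thesis
    using card_image[OF inj_on_subset[OF \<open>inj b\<close>]] by simp
qed

text \<open>Giving an element of maximal weight the last slot reduces to a smaller set.\<close>

lemma inj_on_slots_above_weight:
  fixes w :: "'a \<Rightarrow> nat"
  assumes "finite M" "\<And>\<alpha>. \<alpha> \<in> M \<Longrightarrow> w \<alpha> \<le> card {\<beta> \<in> M. w \<beta> < w \<alpha>}"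
  shows "\<exists>g. inj_on g M \<and> g ` M \<subseteq> {1..card M} \<and> (\<forall>\<alpha>\<in>M. w \<alpha> < g \<alpha>)"
  using assms
proof (induction "card M" arbitrary: M)
  case 0
  then show ?case by simp
next
  case (Suc n M)
  then have "w ` M \<noteq> {}" by auto
  then obtain a where a: "a \<in> M" "w a = Max (w ` M)"
    using Max_in[of "w ` M"] Suc.prems(1) by (metis finite_imageI imageE)
  then have a_max: "w \<beta> \<le> w a" if "\<beta> \<in> M" for \<beta>
    using that Suc.prems(1) by simp
  define M' where "M' = M - {a}"
  have card_M': "card M' = n" and "finite M'"
    using Suc.hyps(2) a(1) Suc.prems(1) by (simp_all add: M'_def)
  have "{\<beta> \<in> M'. w \<beta> < w \<alpha>} = {\<beta> \<in> M. w \<beta> < w \<alpha>}" if "\<alpha> \<in> M'" for \<alpha>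
    using that a_max by (fastforce simp: M'_def)
  then have "w \<alpha> \<le> card {\<beta> \<in> M'. w \<beta> < w \<alpha>}" if "\<alpha> \<in> M'" for \<alpha>
    using that Suc.prems(2) by (simp add: M'_def)
  then obtain g where g: "inj_on g M'" "g ` M' \<subseteq> {1..n}" "\<forall>\<alpha>\<in>M'. w \<alpha> < g \<alpha>"
    using Suc.hyps(1)[OF card_M'[symmetric] \<open>finite M'\<close>] card_M' by auto
  have "w a \<le> card {\<beta> \<in> M. w \<beta> < w a}"
    using Suc.prems(2) a(1) .
  also have "\<dots> \<le> card M'"
    by (rule card_mono[OF \<open>finite M'\<close>]) (auto simp: M'_def)
  finally have w_a: "w a < Suc n"
    using card_M' by simp
  have M: "M = insert a M'" "a \<notin> M'"
    using a(1) by (auto simp: M'_def)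
  have "Suc n \<notin> g ` M'"
    using g(2) by fastforce
  then have "inj_on (g(a := Suc n)) M"
    using g(1) M by (auto simp: inj_on_def image_iff)
  moreover have "(g(a := Suc n)) ` M \<subseteq> {1..card M}"
    using g(2) M Suc.hyps(2) by auto
  moreover have "\<forall>\<alpha>\<in>M. w \<alpha> < (g(a := Suc n)) \<alpha>"
    using g(3) w_a M by auto
  ultimately show ?case by blast
qed

lemma poly_total_deg_le_eq_ridge_prod_poly:
  fixes q :: "real^'m \<Rightarrow> real"
  assumes "poly_total_deg_le k q"
  shows "\<exists>u. \<forall>x. q x = ridge_prod_poly (\<Sum>i=0..k. (CARD('m) + i - 1) choose i) u x"
proof -
  define N where "N = (\<Sum>i=0..k. (CARD('m) + i - 1) choose i)"
  define M where "M = (exponents_le k :: ('m \<Rightarrow> nat) set)"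
  obtain c where c: "\<And>x. q x = (\<Sum>\<alpha>\<in>M. c \<alpha> * monom \<alpha> x)"
    using assms unfolding poly_total_deg_le_def M_def by blast
  have "finite M"
    unfolding M_def by (rule finite_exponents_le)
  then obtain g where g: "inj_on g M" "g ` M \<subseteq> {1..card M}" "\<forall>\<alpha>\<in>M. mdeg \<alpha> < g \<alpha>"
    using inj_on_slots_above_weight[of M mdeg] le_card_exponents_of_smaller_degree
    unfolding M_def by blast
  have g_N: "g ` M \<subseteq> {1..N}"
    using g(2) card_exponents_le[of k, where 'm='m] unfolding N_def M_def by fastforce
  define G where "G i = (if i \<in> g ` M then (\<lambda>x. c (inv_into M g i) * monom (inv_into M g i) x)
                         else (\<lambda>x. 0))" for i
  have "affine_product i (G i)" if "i \<in> {1..N}" for i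
  proof (cases "i \<in> g ` M")
    case True
    then obtain \<alpha> where "\<alpha> \<in> M" "i = g \<alpha>" by blast
    then have "G i = (\<lambda>x. c \<alpha> * monom \<alpha> x)" and "Suc (mdeg \<alpha>) \<le> i"
      using g(1,3) by (auto simp: G_def)
    then show ?thesis
      using affine_product_mono[OF affine_product_cmult_monom] by simp
  next
    case False
    then show ?thesis
      using affine_product_zero[of "i - 1"] that by (simp add: G_def)
  qed
  then obtain V where V: "\<And>i x. i \<in> {1..N} \<Longrightarrow> G i x = (\<Prod>j=1..i. xcheck x \<bullet> V i j)"
    unfolding affine_product_def by metis
  have "q x = ridge_prod_poly N V x" for x
  proof -
    have "ridge_prod_poly N V x = (\<Sum>i=1..N. G i x)"
      unfolding ridge_prod_poly_def using V by simp
    also have "\<dots> = (\<Sum>i\<in>g ` M. G i x)"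
      by (rule sum.mono_neutral_right) (use g_N in \<open>auto simp: G_def\<close>)
    also have "\<dots> = (\<Sum>\<alpha>\<in>M. G (g \<alpha>) x)"
      using sum.reindex[OF g(1), of "\<lambda>i. G i x"] by simp
    also have "\<dots> = (\<Sum>\<alpha>\<in>M. c \<alpha> * monom \<alpha> x)"
      by (rule sum.cong) (use g(1) in \<open>auto simp: G_def\<close>)
    finally show ?thesis
      using c by simp
  qed
  then show ?thesis
    unfolding N_def by blast
qed

section \<open>Polynomial functions have bounded total degree\<close>

lemma poly_total_deg_le_mono:
  assumes "poly_total_deg_le a p" "a \<le> b"
  shows "poly_total_deg_le b p"
proof -
  obtain c where c: "\<And>x. p x = (\<Sum>\<alpha>\<in>exponents_le a. c \<alpha> * monom \<alpha> x)"
    using assms(1) unfolding poly_total_deg_le_def by blast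
  define c' where "c' \<alpha> = (if mdeg \<alpha> \<le> a then c \<alpha> else 0)" for \<alpha>
  have "(\<Sum>\<alpha>\<in>exponents_le b. c' \<alpha> * monom \<alpha> x) = (\<Sum>\<alpha>\<in>exponents_le a. c' \<alpha> * monom \<alpha> x)" for x
    by (rule sum.mono_neutral_right) (use assms(2) finite_exponents_le in \<open>auto simp: c'_def\<close>)
  then have "p x = (\<Sum>\<alpha>\<in>exponents_le b. c' \<alpha> * monom \<alpha> x)" for x
    unfolding c by (simp add: c'_def)
  then show ?thesis
    unfolding poly_total_deg_le_def by blast
qed

lemma poly_total_deg_le_add:
  assumes "poly_total_deg_le k p" "poly_total_deg_le k q"
  shows "poly_total_deg_le k (\<lambda>x. p x + q x)"
proof -
  obtain c where c: "\<And>x. p x = (\<Sum>\<alpha>\<in>exponents_le k. c \<alpha> * monom \<alpha> x)"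
    using assms(1) unfolding poly_total_deg_le_def by blast
  obtain d where d: "\<And>x. q x = (\<Sum>\<alpha>\<in>exponents_le k. d \<alpha> * monom \<alpha> x)"
    using assms(2) unfolding poly_total_deg_le_def by blast
  from c d have "p x + q x = (\<Sum>\<alpha>\<in>exponents_le k. (c \<alpha> + d \<alpha>) * monom \<alpha> x)" for x
    by (simp add: sum.distrib distrib_right)
  then show ?thesis
    unfolding poly_total_deg_le_def by (intro exI[of _ "\<lambda>\<alpha>. c \<alpha> + d \<alpha>"] allI)
qed

lemma poly_total_deg_le_cmult:
  assumes "poly_total_deg_le k p"
  shows "poly_total_deg_le k (\<lambda>x. r * p x)"
proof -
  obtain c where "\<And>x. p x = (\<Sum>\<alpha>\<in>exponents_le k. c \<alpha> * monom \<alpha> x)"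
    using assms unfolding poly_total_deg_le_def by blast
  then have "r * p x = (\<Sum>\<alpha>\<in>exponents_le k. (r * c \<alpha>) * monom \<alpha> x)" for x
    by (simp add: sum_distrib_left mult.assoc)
  then show ?thesis
    unfolding poly_total_deg_le_def by (intro exI[of _ "\<lambda>\<alpha>. r * c \<alpha>"] allI)
qed

lemma poly_total_deg_le_sum:
  fixes F :: "'s \<Rightarrow> real^'m \<Rightarrow> real"
  assumes "finite S" "\<And>s. s \<in> S \<Longrightarrow> poly_total_deg_le k (F s)"
  shows "poly_total_deg_le k (\<lambda>x. \<Sum>s\<in>S. F s x)"
  using assms
proof (induction S rule: finite_induct)
  case empty
  have "poly_total_deg_le k (\<lambda>x::real^'m. 0)"
    unfolding poly_total_deg_le_def by (rule exI[of _ "\<lambda>_. 0"]) simp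
  then show ?case by simp
next
  case (insert a S)
  then show ?case
    using poly_total_deg_le_add[of k "F a" "\<lambda>x. \<Sum>s\<in>S. F s x"] by simp
qed

lemma poly_total_deg_le_monom:
  assumes "mdeg \<beta> \<le> k"
  shows "poly_total_deg_le k (monom \<beta>)"
proof -
  have "(\<Sum>\<alpha>\<in>exponents_le k. (if \<alpha> = \<beta> then 1 else 0) * monom \<alpha> x) = monom \<beta> x" for x
    using assms by (simp add: if_distrib[of "\<lambda>c. c * _"] sum.delta[OF finite_exponents_le]
                         cong: if_cong)
  then show ?thesis
    unfolding poly_total_deg_le_def by (intro exI[of _ "\<lambda>\<alpha>. if \<alpha> = \<beta> then 1 else 0"] allI) simp
qed

lemma poly_total_deg_le_const: "poly_total_deg_le 0 (\<lambda>x::real^'m. r)"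
  using poly_total_deg_le_cmult[OF poly_total_deg_le_monom[of "\<lambda>_. 0" 0], of r] by simp

lemma poly_total_deg_le_mult:
  fixes p q :: "real^'m::finite \<Rightarrow> real"
  assumes "poly_total_deg_le a p" "poly_total_deg_le b q"
  shows "poly_total_deg_le (a + b) (\<lambda>x. p x * q x)"
proof -
  obtain c where c: "\<And>x. p x = (\<Sum>\<alpha>\<in>exponents_le a. c \<alpha> * monom \<alpha> x)"
    using assms(1) unfolding poly_total_deg_le_def by blast
  obtain d where d: "\<And>x. q x = (\<Sum>\<beta>\<in>exponents_le b. d \<beta> * monom \<beta> x)"
    using assms(2) unfolding poly_total_deg_le_def by blast
  have monom_add: "monom \<alpha> x * monom \<beta> x = monom (\<lambda>i. \<alpha> i + \<beta> i) x" for \<alpha> \<beta> :: "'m \<Rightarrow> nat" and x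
    by (simp add: power_add prod.distrib)
  have "poly_total_deg_le (a + b) (\<lambda>x. \<Sum>\<alpha>\<in>exponents_le a. \<Sum>\<beta>\<in>exponents_le b.
                                          (c \<alpha> * d \<beta>) * monom (\<lambda>i. \<alpha> i + \<beta> i) x)"
    by (intro poly_total_deg_le_sum finite_exponents_le poly_total_deg_le_cmult
          poly_total_deg_le_monom) (auto simp: sum.distrib)
  then show ?thesis
    unfolding c d by (simp add: sum_product monom_add[symmetric] mult_ac)
qed

lemma poly_total_deg_le_linear:
  fixes f :: "real^'m \<Rightarrow> real"
  assumes "linear f"
  shows "poly_total_deg_le 1 f"
proof -
  define e where "e i = (\<lambda>j. if j = i then 1 else 0 :: nat)" for i :: 'm
  have monom_e: "monom (e i) x = x $ i" for i x
    by (simp add: e_def if_distrib prod.delta cong: if_cong)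
  have "f = (\<lambda>x. \<Sum>i\<in>UNIV. f (axis i 1) * monom (e i) x)"
  proof
    fix x
    have "f x = f (\<Sum>i\<in>UNIV. x $ i *\<^sub>R axis i 1)"
      using basis_expansion[of x] by (simp add: scalar_mult_eq_scaleR)
    then show "f x = (\<Sum>i\<in>UNIV. f (axis i 1) * monom (e i) x)"
      using assms by (simp add: linear_sum linear_scale monom_e mult.commute)
  qed
  moreover have "poly_total_deg_le 1 (\<lambda>x. \<Sum>i\<in>UNIV. f (axis i 1) * monom (e i) x)"
    by (intro poly_total_deg_le_sum poly_total_deg_le_cmult poly_total_deg_le_monom)
       (auto simp: e_def sum.delta)
  ultimately show ?thesis
    by simp
qed

lemma real_polynomial_function_imp_poly_total_deg_le:
  fixes p :: "real^'m \<Rightarrow> real"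
  assumes "real_polynomial_function p"
  shows "\<exists>k. poly_total_deg_le k p"
  using assms
proof (induction rule: real_polynomial_function.induct)
  case (linear f)
  then show ?case using poly_total_deg_le_linear bounded_linear.linear by blast
next
  case (const c)
  then show ?case using poly_total_deg_le_const by blast
next
  case (add f g)
  then obtain a b where "poly_total_deg_le a f" "poly_total_deg_le b g" by blast
  then have "poly_total_deg_le (max a b) f" "poly_total_deg_le (max a b) g"
    by (auto intro: poly_total_deg_le_mono)
  then show ?case
    using poly_total_deg_le_add by blast
next
  case (mult f g)
  then show ?case using poly_total_deg_le_mult by blast
qed

theorem mainTheorem2:
  fixes C :: "(real^'m) set" and f :: "real^'m \<Rightarrow> real" and \<epsilon> :: real
  assumes "compact C" and "continuous_on C f" and "\<epsilon> > 0"
  shows "(\<exists>N::nat. N > 0 \<and> (\<exists>u. \<forall>x\<in>C. \<bar>f x - ridge_prod_poly N u x\<bar> < \<epsilon>))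
       \<and> (\<forall>(k::nat) (q :: real^'m \<Rightarrow> real).
            poly_total_deg_le k q \<and> (\<forall>x\<in>C. \<bar>f x - q x\<bar> < \<epsilon>) \<longrightarrow>
            (\<exists>u. \<forall>x\<in>C. \<bar>f x - ridge_prod_poly (\<Sum>i=0..k. (CARD('m) + i - 1) choose i) u x\<bar> < \<epsilon>))"
    (is "?approx \<and> ?degree_bound")
proof
  show ?degree_bound
    using poly_total_deg_le_eq_ridge_prod_poly by metis
  obtain g where g: "polynomial_function g" "\<forall>x\<in>C. \<bar>f x - g x\<bar> < \<epsilon>"
    using Stone_Weierstrass_polynomial_function[OF assms] by auto
  then obtain k where "poly_total_deg_le k g"
    using real_polynomial_function_imp_poly_total_deg_le real_polynomial_function_eq by blast
  moreover have "(\<Sum>i=0..k. (CARD('m) + i - 1) choose i) > 0"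
    by (simp add: sum_pos2[of _ 0])
  ultimately show ?approx
    using \<open>?degree_bound\<close> g(2) by blast
qed

end
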